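(* Let $\mathcal{X}$ be a compact design space and, for $i=1,\dots,\nu$, let $\eta_i(x,\theta_i)$ be regression functions with parameters in compact sets $\Theta_i\subset\mathbb{R}^{d_i}$ such that (A1) each $\eta_i(\cdot,\theta_i)$ is continuously differentiable with respect to $\theta_i$, and (A2) for every design $\xi$ with $T_{\mathrm{P}}(\xi)>0$ and every pair $(i,j)$ with $p_{i,j}\neq0$, the infimum $\inf_{\theta_{i,j}\in\Theta_j}\int_{\mathcal{X}}[\eta_i(x,\overline{\theta}_i)-\eta_j(x,\theta_{i,j})]^2\xi(dx)$ is attained at a unique point $\widehat{\theta}_{i,j}(\xi)$ in the interior of $\Theta_j$. Here $p_{i,j}\ge0$ are weights, $\overline{\theta}_i\in\Theta_i$ fixed, and $T_{\mathrm{P}}(\xi)=\sum_{i,j}p_{i,j}\inf_{\theta_{i,j}\in\Theta_j}\int_{\mathcal{X}}[\eta_i(x,\overline{\theta}_i)-\eta_j(x,\theta_{i,j})]^2\xi(dx)$. Consider the algorithm: start with a design $\xi_0$ with $T_{\mathrm{P}}(\xi_0)>0$; given $\xi_s$ with support $\mathcal{S}_{[s]}$, (1) set $\mathcal{S}_{[s+1]}=\mathcal{S}_{[s]}\cup\mathcal{E}_{[s]}$ where $\mathcal{E}_{[s]}$ is the set of all local maxima of $x\mapsto\Psi(x,\xi_s)$ on $\mathcal{X}$; (2) choose weights $\omega_{[s+1]}$ maximizing $\omega\mapsto T_{\mathrm{P}}(\{\mathcal{S}_{[s+1]},\omega\})$ over probability weight vectors on $\mathcal{S}_{[s+1]}$,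 discard zero-weight points, and let $\xi_{s+1}$ be the resulting design. Then at the end of each iteration, the function $x\mapsto\Psi(x,\xi_{s+1})$ takes one and the same value at all support points of $\xi_{s+1}$.
   Context: A design is a probability measure on $\mathcal{X}$ with finite support; $\{\mathcal{S},\omega\}$ denotes the design on the finite set $\mathcal{S}$ with weight vector $\omega$. Under (A1)–(A2), for a design $\xi$ with $T_{\mathrm{P}}(\xi)>0$, $$\Psi(x,\xi)=\sum_{i,j=1}^{\nu}p_{i,j}\big[\eta_i(x,\overline{\theta}_i)-\eta_j(x,\widehat{\theta}_{i,j}(\xi))\big]^2.$$ *)

theory Defs
  imports "HOL-Analysis.Analysis"
begin

text \<open>A design on the design space X: a probability measure with finite support,
  represented by its weight function (the weight of every point).\<close>

definition supp :: "('x \<Rightarrow> real) \<Rightarrow> 'x set" where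
  "supp \<xi> = {x. \<xi> x \<noteq> 0}"

definition design :: "'x set \<Rightarrow> ('x \<Rightarrow> real) \<Rightarrow> bool" where
  "design X \<xi> \<longleftrightarrow> (\<forall>x. \<xi> x \<ge> 0) \<and> finite (supp \<xi>) \<and> supp \<xi> \<subseteq> X
      \<and> sum \<xi> (supp \<xi>) = 1"

definition loss :: "(nat \<Rightarrow> 'x \<Rightarrow> 'p \<Rightarrow> real) \<Rightarrow> (nat \<Rightarrow> 'p) \<Rightarrow> nat \<Rightarrow> nat
      \<Rightarrow> ('x \<Rightarrow> real) \<Rightarrow> 'p \<Rightarrow> real" where
  "loss \<eta> tbar i j \<xi> \<theta> = (\<Sum>x\<in>supp \<xi>. \<xi> x * (\<eta> i x (tbar i) - \<eta> j x \<theta>)\<^sup>2)"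

definition TP :: "nat \<Rightarrow> (nat \<Rightarrow> nat \<Rightarrow> real) \<Rightarrow> (nat \<Rightarrow> 'x \<Rightarrow> 'p \<Rightarrow> real)
      \<Rightarrow> (nat \<Rightarrow> 'p) \<Rightarrow> (nat \<Rightarrow> 'p set) \<Rightarrow> ('x \<Rightarrow> real) \<Rightarrow> real" where
  "TP \<nu> p \<eta> tbar \<Theta> \<xi> =
     (\<Sum>i\<in>{1..\<nu>}. \<Sum>j\<in>{1..\<nu>}. p i j * (INF \<theta>\<in>\<Theta> j. loss \<eta> tbar i j \<xi> \<theta>))"

text \<open>The (unique, under (A2)) minimiser \<open>\<theta>hat_{i,j}(\<xi>)\<close>.\<close>

definition thetahat :: "(nat \<Rightarrow> 'x \<Rightarrow> 'p \<Rightarrow> real) \<Rightarrow> (nat \<Rightarrow> 'p) \<Rightarrow> (nat \<Rightarrow> 'p set)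
      \<Rightarrow> nat \<Rightarrow> nat \<Rightarrow> ('x \<Rightarrow> real) \<Rightarrow> 'p" where
  "thetahat \<eta> tbar \<Theta> i j \<xi> =
     (THE \<theta>. \<theta> \<in> \<Theta> j \<and> loss \<eta> tbar i j \<xi> \<theta> = (INF t\<in>\<Theta> j. loss \<eta> tbar i j \<xi> t))"

definition Psi :: "nat \<Rightarrow> (nat \<Rightarrow> nat \<Rightarrow> real) \<Rightarrow> (nat \<Rightarrow> 'x \<Rightarrow> 'p \<Rightarrow> real)
      \<Rightarrow> (nat \<Rightarrow> 'p) \<Rightarrow> (nat \<Rightarrow> 'p set) \<Rightarrow> 'x \<Rightarrow> ('x \<Rightarrow> real) \<Rightarrow> real" where
  "Psi \<nu> p \<eta> tbar \<Theta> x \<xi> =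
     (\<Sum>i\<in>{1..\<nu>}. \<Sum>j\<in>{1..\<nu>}.
        p i j * (\<eta> i x (tbar i) - \<eta> j x (thetahat \<eta> tbar \<Theta> i j \<xi>))\<^sup>2)"

definition local_max_on :: "'x::topological_space set \<Rightarrow> ('x \<Rightarrow> real) \<Rightarrow> 'x \<Rightarrow> bool" where
  "local_max_on X f x \<longleftrightarrow> x \<in> X \<and> (\<exists>U. open U \<and> x \<in> U \<and> (\<forall>y\<in>U \<inter> X. f y \<le> f x))"

text \<open>Interior of a parameter set \<Theta> \<subseteq> E, where the linear subspace E (of dimension d)
  plays the role of \<open>\<real>^d\<close>: interior relative to E.\<close>

definition interior_in :: "'p::real_normed_vector set \<Rightarrow> 'p set \<Rightarrow> 'p set" where
  "interior_in E \<Theta> = {\<theta>. \<exists>U. openin (top_of_set E) U \<and> \<theta> \<in> U \<and> U \<subseteq> \<Theta>}"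

end

theory Submission
  imports Defs
begin

(*
  A transfer of a small weight t from one support point y of \<xi>_{s+1} to another support point x
  yields a design supported on S_{s+1}, so it cannot increase T_P.  The transfer changes every loss
  by t times the difference of the squared deviations at x and at y.  Since the minimiser of each
  loss is unique and the parameter sets are compact, the infimum over \<Theta>_j then changes by at
  least t times that difference at \<theta>hat_{i,j}, up to t * \<epsilon> (a Danskin-type envelope bound).
  Summing, T_P increases at rate at least \<Psi>(x) - \<Psi>(y) - \<epsilon>, so optimality forces
  \<Psi>(x) \<le> \<Psi>(y), and by symmetry equality.
*)

lemma eventually_unique_argmin_perturbed_ge:
  fixes a b :: "'p::t2_space \<Rightarrow> real"
  assumes K: "compact K" and a: "continuous_on K a" and b: "continuous_on K b" and "\<theta>\<^sub>0 \<in> K"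
    and min: "\<And>\<theta>. \<theta> \<in> K \<Longrightarrow> a \<theta>\<^sub>0 \<le> a \<theta>"
    and unique: "\<And>\<theta>. \<theta> \<in> K \<Longrightarrow> a \<theta> = a \<theta>\<^sub>0 \<Longrightarrow> \<theta> = \<theta>\<^sub>0"
    and "e > 0"
  shows "\<forall>\<^sub>F t in at_right 0. \<forall>\<theta>\<in>K. a \<theta>\<^sub>0 + t * (b \<theta>\<^sub>0 - e) \<le> a \<theta> + t * b \<theta>"
proof -
  \<comment> \<open>Off L the bound holds termwise; L is compact and misses \<open>\<theta>\<^sub>0\<close>, so there a stays
    a positive gap above its minimum, which absorbs the \<open>O(t)\<close> error.\<close>
  define L where "L = K \<inter> b -` {..b \<theta>\<^sub>0 - e}"
  have easy: "a \<theta>\<^sub>0 + t * (b \<theta>\<^sub>0 - e) \<le> a \<theta> + t * b \<theta>" if "t > 0" "\<theta> \<in> K - L" for t \<theta>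
  proof -
    have "t * (b \<theta>\<^sub>0 - e) \<le> t * b \<theta>"
      using that by (intro mult_left_mono) (auto simp: L_def)
    moreover have "a \<theta>\<^sub>0 \<le> a \<theta>"
      using that min by blast
    ultimately show ?thesis
      by linarith
  qed
  show ?thesis
  proof (cases "L = {}")
    case True
    then show ?thesis
      using easy by (auto simp: eventually_at_right_field intro: exI[of _ 1])
  next
    case False
    have "closed L"
      unfolding L_def by (rule continuous_closed_preimage[OF b compact_imp_closed[OF K] closed_atMost])
    then have "compact L"
      using compact_Int_closed[OF K] by (metis L_def Int_absorb Int_assoc)
    then obtain \<theta>\<^sub>1 where "\<theta>\<^sub>1 \<in> L" and \<theta>\<^sub>1: "\<And>\<theta>. \<theta> \<in> L \<Longrightarrow> a \<theta>\<^sub>1 \<le> a \<theta>"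
      using continuous_attains_inf[OF _ False continuous_on_subset[OF a]] L_def by blast
    obtain m where "m \<in> K" and m: "\<And>\<theta>. \<theta> \<in> K \<Longrightarrow> b m \<le> b \<theta>"
      using continuous_attains_inf[OF K _ b] \<open>\<theta>\<^sub>0 \<in> K\<close> by blast
    have "\<theta>\<^sub>1 \<noteq> \<theta>\<^sub>0"
      using \<open>\<theta>\<^sub>1 \<in> L\<close> \<open>e > 0\<close> by (auto simp: L_def)
    then have gap: "a \<theta>\<^sub>1 - a \<theta>\<^sub>0 > 0"
      using min[of \<theta>\<^sub>1] unique[of \<theta>\<^sub>1] \<open>\<theta>\<^sub>1 \<in> L\<close> by (force simp: L_def)
    have "((\<lambda>t. t * (b \<theta>\<^sub>0 - e - b m)) \<longlongrightarrow> 0 * (b \<theta>\<^sub>0 - e - b m)) (at_right 0)"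
      by (intro tendsto_intros)
    then have "\<forall>\<^sub>F t in at_right 0. t * (b \<theta>\<^sub>0 - e - b m) < a \<theta>\<^sub>1 - a \<theta>\<^sub>0"
      using gap by (simp add: order_tendstoD(2))
    moreover have "\<forall>\<^sub>F t in at_right (0::real). t > 0"
      by (simp add: eventually_at_right_less)
    ultimately show ?thesis
    proof eventually_elim
      case (elim t)
      show ?case
      proof
        fix \<theta> assume "\<theta> \<in> K"
        show "a \<theta>\<^sub>0 + t * (b \<theta>\<^sub>0 - e) \<le> a \<theta> + t * b \<theta>"
        proof (cases "\<theta> \<in> L")
          case True
          have "t * b m \<le> t * b \<theta>"
            using m[OF \<open>\<theta> \<in> K\<close>] elim(2) by (simp add: mult_left_mono)
          with elim(1) \<theta>\<^sub>1[OF True] show ?thesis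
            by (simp add: algebra_simps)
        qed (use easy elim \<open>\<theta> \<in> K\<close> in auto)
      qed
    qed
  qed
qed

definition move_weight :: "('x \<Rightarrow> real) \<Rightarrow> 'x \<Rightarrow> 'x \<Rightarrow> real \<Rightarrow> 'x \<Rightarrow> real" where
  "move_weight \<xi> y x t z = \<xi> z + (if z = x then t else 0) - (if z = y then t else 0)"

lemma supp_move_weight:
  assumes "x \<in> supp \<xi>" "y \<in> supp \<xi>"
  shows "supp (move_weight \<xi> y x t) \<subseteq> supp \<xi>"
  using assms by (auto simp: supp_def move_weight_def)

lemma sum_supp_extend:
  fixes f :: "'x \<Rightarrow> real"
  assumes "finite S" "supp \<xi> \<subseteq> S"
  shows "(\<Sum>z\<in>supp \<xi>. \<xi> z * f z) = (\<Sum>z\<in>S. \<xi> z * f z)"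
  by (rule sum.mono_neutral_left[OF assms]) (auto simp: supp_def)

lemma design_move_weight:
  assumes "design X \<xi>" "x \<in> supp \<xi>" "y \<in> supp \<xi>" "0 \<le> t" "t \<le> \<xi> y"
  shows "design X (move_weight \<xi> y x t)"
proof -
  have fin: "finite (supp \<xi>)" and "supp \<xi> \<subseteq> X" and "sum \<xi> (supp \<xi>) = 1" and "\<forall>z. \<xi> z \<ge> 0"
    using assms(1) by (auto simp: design_def)
  moreover have "sum (move_weight \<xi> y x t) (supp (move_weight \<xi> y x t)) = sum \<xi> (supp \<xi>)"
    using sum_supp_extend[OF fin supp_move_weight[OF assms(2,3)], where f = "\<lambda>_. 1"] fin assms(2,3)
    by (simp add: move_weight_def sum.distrib sum_subtractf)
  ultimately show ?thesis
    using assms(4,5) supp_move_weight[OF assms(2,3)] finite_subset[OF supp_move_weight[OF assms(2,3)] fin]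
    by (auto simp: design_def move_weight_def add_nonneg_nonneg)
qed

lemma eventually_design_move_weight:
  assumes "design X \<xi>" "x \<in> supp \<xi>" "y \<in> supp \<xi>"
  shows "\<forall>\<^sub>F t in at_right 0. design X (move_weight \<xi> y x t)"
proof -
  have "\<xi> y \<ge> 0" "\<xi> y \<noteq> 0"
    using assms(1,3) by (auto simp: design_def supp_def)
  then show ?thesis
    unfolding eventually_at_right_field
    by (intro exI[of _ "\<xi> y"]) (auto intro: design_move_weight[OF assms])
qed

lemma loss_move_weight:
  assumes "finite (supp \<xi>)" "x \<in> supp \<xi>" "y \<in> supp \<xi>"
  shows "loss \<eta> tbar i j (move_weight \<xi> y x t) \<theta> = loss \<eta> tbar i j \<xi> \<theta>
           + t * ((\<eta> i x (tbar i) - \<eta> j x \<theta>)\<^sup>2 - (\<eta> i y (tbar i) - \<eta> j y \<theta>)\<^sup>2)"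
proof -
  define f where "f z = (\<eta> i z (tbar i) - \<eta> j z \<theta>)\<^sup>2" for z
  have "loss \<eta> tbar i j (move_weight \<xi> y x t) \<theta> = (\<Sum>z\<in>supp \<xi>. move_weight \<xi> y x t z * f z)"
    unfolding loss_def f_def by (rule sum_supp_extend[OF assms(1) supp_move_weight[OF assms(2,3)]])
  also have "\<dots> = (\<Sum>z\<in>supp \<xi>. \<xi> z * f z + ((if z = x then t * f z else 0) - (if z = y then t * f z else 0)))"
    by (intro sum.cong) (auto simp: move_weight_def algebra_simps)
  also have "\<dots> = loss \<eta> tbar i j \<xi> \<theta> + t * (f x - f y)"
    using assms by (simp add: loss_def f_def sum.distrib sum_subtractf algebra_simps)
  finally show ?thesis
    unfolding f_def .
qed

lemma loss_nonneg:
  assumes "design X \<xi>"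
  shows "loss \<eta> tbar i j \<xi> \<theta> \<ge> 0"
  using assms unfolding loss_def design_def by (auto intro!: sum_nonneg)

lemma eventually_INF_loss_move_weight_ge:
  fixes \<eta> :: "nat \<Rightarrow> 'x \<Rightarrow> 'p::t2_space \<Rightarrow> real"
  assumes \<xi>: "design X \<xi>" "x \<in> supp \<xi>" "y \<in> supp \<xi>"
    and K: "compact K" and cont: "\<And>z. z \<in> X \<Longrightarrow> continuous_on K (\<eta> j z)"
    and "\<theta>\<^sub>0 \<in> K" and inf: "loss \<eta> tbar i j \<xi> \<theta>\<^sub>0 = (INF \<theta>\<in>K. loss \<eta> tbar i j \<xi> \<theta>)"
    and unique: "\<forall>\<theta>\<in>K. loss \<eta> tbar i j \<xi> \<theta> = (INF \<theta>\<in>K. loss \<eta> tbar i j \<xi> \<theta>) \<longrightarrow> \<theta> = \<theta>\<^sub>0"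
    and "e > 0"
  shows "\<forall>\<^sub>F t in at_right 0. (INF \<theta>\<in>K. loss \<eta> tbar i j \<xi> \<theta>)
           + t * ((\<eta> i x (tbar i) - \<eta> j x \<theta>\<^sub>0)\<^sup>2 - (\<eta> i y (tbar i) - \<eta> j y \<theta>\<^sub>0)\<^sup>2 - e)
         \<le> (INF \<theta>\<in>K. loss \<eta> tbar i j (move_weight \<xi> y x t) \<theta>)"
proof -
  define a where "a = loss \<eta> tbar i j \<xi>"
  define b where "b \<theta> = (\<eta> i x (tbar i) - \<eta> j x \<theta>)\<^sup>2 - (\<eta> i y (tbar i) - \<eta> j y \<theta>)\<^sup>2" for \<theta>
  have fin: "finite (supp \<xi>)" and supp: "supp \<xi> \<subseteq> X"
    using \<xi>(1) by (auto simp: design_def)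
  have "continuous_on K a"
    unfolding a_def loss_def using supp
    by (intro continuous_on_sum continuous_on_mult continuous_on_const continuous_on_power
        continuous_on_diff cont) auto
  moreover have "continuous_on K b"
    unfolding b_def using supp \<xi>(2,3)
    by (intro continuous_on_power continuous_on_diff continuous_on_const cont) auto
  moreover have min: "a \<theta>\<^sub>0 \<le> a \<theta>" if "\<theta> \<in> K" for \<theta>
    unfolding a_def inf using that loss_nonneg[OF \<xi>(1)]
    by (intro cINF_lower bdd_belowI2) auto
  moreover have "\<theta> = \<theta>\<^sub>0" if "\<theta> \<in> K" "a \<theta> = a \<theta>\<^sub>0" for \<theta>
    using that unique inf by (simp add: a_def)
  ultimately have "\<forall>\<^sub>F t in at_right 0. \<forall>\<theta>\<in>K. a \<theta>\<^sub>0 + t * (b \<theta>\<^sub>0 - e) \<le> a \<theta> + t * b \<theta>"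
    using eventually_unique_argmin_perturbed_ge[OF K] \<open>\<theta>\<^sub>0 \<in> K\<close> \<open>e > 0\<close> by blast
  then show ?thesis
    unfolding a_def b_def
  proof eventually_elim
    case (elim t)
    show ?case
    proof (rule cINF_greatest)
      show "K \<noteq> {}"
        using \<open>\<theta>\<^sub>0 \<in> K\<close> by blast
    next
      fix \<theta> assume "\<theta> \<in> K"
      then show "(INF \<theta>\<in>K. loss \<eta> tbar i j \<xi> \<theta>) + t * ((\<eta> i x (tbar i) - \<eta> j x \<theta>\<^sub>0)\<^sup>2
          - (\<eta> i y (tbar i) - \<eta> j y \<theta>\<^sub>0)\<^sup>2 - e) \<le> loss \<eta> tbar i j (move_weight \<xi> y x t) \<theta>"
        unfolding loss_move_weight[OF fin \<xi>(2,3)] inf[symmetric] using elim by blast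
    qed
  qed
qed

lemma thetahat_eqI:
  assumes "\<theta>\<^sub>0 \<in> \<Theta> j" "loss \<eta> tbar i j \<xi> \<theta>\<^sub>0 = (INF \<theta>\<in>\<Theta> j. loss \<eta> tbar i j \<xi> \<theta>)"
    and "\<forall>\<theta>\<in>\<Theta> j. loss \<eta> tbar i j \<xi> \<theta> = (INF \<theta>\<in>\<Theta> j. loss \<eta> tbar i j \<xi> \<theta>) \<longrightarrow> \<theta> = \<theta>\<^sub>0"
  shows "thetahat \<eta> tbar \<Theta> i j \<xi> = \<theta>\<^sub>0"
  unfolding thetahat_def by (rule the_equality) (use assms in blast)+

lemma continuous_on_if_has_derivative_within_superset:
  assumes "S \<subseteq> U" "S \<subseteq> E" "\<forall>\<theta>\<in>U. (f has_derivative f' \<theta>) (at \<theta> within E)"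
  shows "continuous_on S f"
  using assms by (blast intro: has_derivative_continuous_on has_derivative_subset)

locale regression_models =
  fixes X :: "'x set"
    and \<nu> :: nat
    and p :: "nat \<Rightarrow> nat \<Rightarrow> real"
    and \<eta> :: "nat \<Rightarrow> 'x \<Rightarrow> 'p::t2_space \<Rightarrow> real"
    and tbar :: "nat \<Rightarrow> 'p"
    and \<Theta> :: "nat \<Rightarrow> 'p set"
  assumes Theta_compact: "\<And>j. j \<in> {1..\<nu>} \<Longrightarrow> compact (\<Theta> j)"
    and eta_continuous: "\<And>j z. j \<in> {1..\<nu>} \<Longrightarrow> z \<in> X \<Longrightarrow> continuous_on (\<Theta> j) (\<eta> j z)"
    and p_nonneg: "\<And>i j. i \<in> {1..\<nu>} \<Longrightarrow> j \<in> {1..\<nu>} \<Longrightarrow> p i j \<ge> 0"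
begin

definition unique_minimisers :: "('x \<Rightarrow> real) \<Rightarrow> bool" where
  "unique_minimisers \<xi> \<longleftrightarrow> (\<forall>i\<in>{1..\<nu>}. \<forall>j\<in>{1..\<nu>}. p i j \<noteq> 0 \<longrightarrow>
     (\<exists>\<theta>\<^sub>0\<in>\<Theta> j. loss \<eta> tbar i j \<xi> \<theta>\<^sub>0 = (INF \<theta>\<in>\<Theta> j. loss \<eta> tbar i j \<xi> \<theta>)
        \<and> (\<forall>\<theta>\<in>\<Theta> j. loss \<eta> tbar i j \<xi> \<theta> = (INF \<theta>\<in>\<Theta> j. loss \<eta> tbar i j \<xi> \<theta>) \<longrightarrow> \<theta> = \<theta>\<^sub>0)))"

lemma eventually_TP_move_weight_ge:
  assumes \<xi>: "design X \<xi>" "x \<in> supp \<xi>" "y \<in> supp \<xi>" "unique_minimisers \<xi>" and "e > 0"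
  shows "\<forall>\<^sub>F t in at_right 0. TP \<nu> p \<eta> tbar \<Theta> \<xi>
           + t * (Psi \<nu> p \<eta> tbar \<Theta> x \<xi> - Psi \<nu> p \<eta> tbar \<Theta> y \<xi> - e * (\<Sum>i\<in>{1..\<nu>}. \<Sum>j\<in>{1..\<nu>}. p i j))
         \<le> TP \<nu> p \<eta> tbar \<Theta> (move_weight \<xi> y x t)"
proof -
  let ?inf = "\<lambda>i j \<zeta>. INF \<theta>\<in>\<Theta> j. loss \<eta> tbar i j \<zeta> \<theta>"
  define c where "c i j = (\<eta> i x (tbar i) - \<eta> j x (thetahat \<eta> tbar \<Theta> i j \<xi>))\<^sup>2
    - (\<eta> i y (tbar i) - \<eta> j y (thetahat \<eta> tbar \<Theta> i j \<xi>))\<^sup>2" for i j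
  have pair: "\<forall>\<^sub>F t in at_right 0.
      p i j * (?inf i j \<xi> + t * (c i j - e)) \<le> p i j * ?inf i j (move_weight \<xi> y x t)"
    if ij: "i \<in> {1..\<nu>}" "j \<in> {1..\<nu>}" for i j
  proof (cases "p i j = 0")
    case False
    then obtain \<theta>\<^sub>0 where \<theta>\<^sub>0: "\<theta>\<^sub>0 \<in> \<Theta> j" "loss \<eta> tbar i j \<xi> \<theta>\<^sub>0 = ?inf i j \<xi>"
        "\<forall>\<theta>\<in>\<Theta> j. loss \<eta> tbar i j \<xi> \<theta> = ?inf i j \<xi> \<longrightarrow> \<theta> = \<theta>\<^sub>0"
      using \<xi>(4) ij False unfolding unique_minimisers_def by blast
    have "c i j = (\<eta> i x (tbar i) - \<eta> j x \<theta>\<^sub>0)\<^sup>2 - (\<eta> i y (tbar i) - \<eta> j y \<theta>\<^sub>0)\<^sup>2"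
      unfolding c_def thetahat_eqI[where \<Theta> = \<Theta> and j = j, OF \<theta>\<^sub>0] by (rule refl)
    with eventually_INF_loss_move_weight_ge[OF \<xi>(1-3) Theta_compact[OF ij(2)] eta_continuous[OF ij(2)] \<theta>\<^sub>0 \<open>e > 0\<close>]
    show ?thesis
      by (auto elim!: eventually_mono intro: mult_left_mono p_nonneg[OF ij])
  qed simp
  have "\<forall>\<^sub>F t in at_right 0. \<forall>i\<in>{1..\<nu>}. \<forall>j\<in>{1..\<nu>}.
      p i j * (?inf i j \<xi> + t * (c i j - e)) \<le> p i j * ?inf i j (move_weight \<xi> y x t)"
    using pair by (intro eventually_ball_finite ballI) auto
  then show ?thesis
  proof eventually_elim
    case (elim t)
    have "TP \<nu> p \<eta> tbar \<Theta> \<xi>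
        + t * (Psi \<nu> p \<eta> tbar \<Theta> x \<xi> - Psi \<nu> p \<eta> tbar \<Theta> y \<xi> - e * (\<Sum>i\<in>{1..\<nu>}. \<Sum>j\<in>{1..\<nu>}. p i j))
      = (\<Sum>i\<in>{1..\<nu>}. \<Sum>j\<in>{1..\<nu>}. p i j * ?inf i j \<xi>
          + (t * (p i j * (\<eta> i x (tbar i) - \<eta> j x (thetahat \<eta> tbar \<Theta> i j \<xi>))\<^sup>2)
             - t * (p i j * (\<eta> i y (tbar i) - \<eta> j y (thetahat \<eta> tbar \<Theta> i j \<xi>))\<^sup>2))
          - t * (e * p i j))"
      unfolding TP_def Psi_def sum.distrib sum_subtractf sum_distrib_left[symmetric] by (simp add: algebra_simps)
    also have "\<dots> = (\<Sum>i\<in>{1..\<nu>}. \<Sum>j\<in>{1..\<nu>}. p i j * (?inf i j \<xi> + t * (c i j - e)))"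
      by (intro sum.cong refl) (simp add: c_def algebra_simps)
    also have "\<dots> \<le> TP \<nu> p \<eta> tbar \<Theta> (move_weight \<xi> y x t)"
      unfolding TP_def using elim by (intro sum_mono) auto
    finally show ?case .
  qed
qed

lemma Psi_le_if_move_weight_not_improving:
  assumes \<xi>: "design X \<xi>" "x \<in> supp \<xi>" "y \<in> supp \<xi>" "unique_minimisers \<xi>"
    and not_improving: "\<forall>\<^sub>F t in at_right 0. TP \<nu> p \<eta> tbar \<Theta> (move_weight \<xi> y x t) \<le> TP \<nu> p \<eta> tbar \<Theta> \<xi>"
  shows "Psi \<nu> p \<eta> tbar \<Theta> x \<xi> \<le> Psi \<nu> p \<eta> tbar \<Theta> y \<xi>"
proof -
  define D where "D = Psi \<nu> p \<eta> tbar \<Theta> x \<xi> - Psi \<nu> p \<eta> tbar \<Theta> y \<xi>"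
  define P where "P = (\<Sum>i\<in>{1..\<nu>}. \<Sum>j\<in>{1..\<nu>}. p i j)"
  have "P \<ge> 0"
    unfolding P_def using p_nonneg by (intro sum_nonneg) auto
  have D_le: "D \<le> e * P" if "e > 0" for e
  proof -
    have "\<forall>\<^sub>F t in at_right 0. t > 0 \<and> t * (D - e * P) \<le> 0"
      using eventually_TP_move_weight_ge[OF \<xi> that] not_improving
        eventually_at_right_less[of 0]
      unfolding D_def P_def by eventually_elim auto
    then obtain t where "t > 0" "t * (D - e * P) \<le> 0"
      using eventually_happens'[OF trivial_limit_at_right_real] by blast
    then show ?thesis
      by (simp add: mult_le_0_iff)
  qed
  have "D \<le> 0"
  proof (rule field_le_epsilon)
    fix e :: real assume "e > 0"
    have "D \<le> e / (P + 1) * P"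
      using D_le[of "e / (P + 1)"] \<open>e > 0\<close> \<open>P \<ge> 0\<close> by simp
    also have "\<dots> \<le> e"
      using \<open>e > 0\<close> \<open>P \<ge> 0\<close> by (simp add: field_simps)
    finally show "D \<le> 0 + e"
      by simp
  qed
  then show ?thesis
    unfolding D_def by simp
qed


lemma Psi_constant_on_supp_if_optimal:
  assumes "design X \<xi>" "unique_minimisers \<xi>"
    and optimal: "\<And>\<omega>. design X \<omega> \<Longrightarrow> supp \<omega> \<subseteq> supp \<xi> \<Longrightarrow> TP \<nu> p \<eta> tbar \<Theta> \<omega> \<le> TP \<nu> p \<eta> tbar \<Theta> \<xi>"
  shows "\<exists>c. \<forall>x\<in>supp \<xi>. Psi \<nu> p \<eta> tbar \<Theta> x \<xi> = c"
proof -
  have Psi_le: "Psi \<nu> p \<eta> tbar \<Theta> x \<xi> \<le> Psi \<nu> p \<eta> tbar \<Theta> y \<xi>"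
    if "x \<in> supp \<xi>" "y \<in> supp \<xi>" for x y
  proof (rule Psi_le_if_move_weight_not_improving[OF \<open>design X \<xi>\<close> that \<open>unique_minimisers \<xi>\<close>])
    show "\<forall>\<^sub>F t in at_right 0. TP \<nu> p \<eta> tbar \<Theta> (move_weight \<xi> y x t) \<le> TP \<nu> p \<eta> tbar \<Theta> \<xi>"
      using eventually_design_move_weight[OF \<open>design X \<xi>\<close> that]
      by eventually_elim (rule optimal[OF _ supp_move_weight[OF that]])
  qed
  show ?thesis
  proof (cases "supp \<xi> = {}")
    case False
    then obtain x\<^sub>0 where "x\<^sub>0 \<in> supp \<xi>"
      by blast
    then show ?thesis
      using Psi_le by (intro exI[of _ "Psi \<nu> p \<eta> tbar \<Theta> x\<^sub>0 \<xi>"]) (auto intro: order_antisym)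
  qed simp
qed

end

theorem lemma3p2:
  fixes X :: "'x::topological_space set"
    and \<nu> :: nat
    and E :: "nat \<Rightarrow> 'p::euclidean_space set"
    and \<Theta> :: "nat \<Rightarrow> 'p set"
    and \<eta> :: "nat \<Rightarrow> 'x \<Rightarrow> 'p \<Rightarrow> real"
    and tbar :: "nat \<Rightarrow> 'p"
    and p :: "nat \<Rightarrow> nat \<Rightarrow> real"
    and \<xi> :: "nat \<Rightarrow> 'x \<Rightarrow> real"
  assumes X_compact: "compact X"
    and nu_pos: "\<nu> \<ge> 1"
    and E_subspace: "\<And>i. i \<in> {1..\<nu>} \<Longrightarrow> subspace (E i)"
    and Theta_compact: "\<And>i. i \<in> {1..\<nu>} \<Longrightarrow> compact (\<Theta> i)"
    and Theta_sub: "\<And>i. i \<in> {1..\<nu>} \<Longrightarrow> \<Theta> i \<subseteq> E i"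
    and tbar_in: "\<And>i. i \<in> {1..\<nu>} \<Longrightarrow> tbar i \<in> \<Theta> i"
    and p_nonneg: "\<And>i j. i \<in> {1..\<nu>} \<Longrightarrow> j \<in> {1..\<nu>} \<Longrightarrow> p i j \<ge> 0"
    and A1: "\<And>i x. i \<in> {1..\<nu>} \<Longrightarrow> x \<in> X \<Longrightarrow>
              \<exists>U D. openin (top_of_set (E i)) U \<and> \<Theta> i \<subseteq> U \<and>
                 (\<forall>\<theta>\<in>U. (\<eta> i x has_derivative blinfun_apply (D \<theta>)) (at \<theta> within E i)) \<and>
                 continuous_on U D"
    and A2: "\<And>\<zeta> i j. design X \<zeta> \<Longrightarrow> TP \<nu> p \<eta> tbar \<Theta> \<zeta> > 0 \<Longrightarrow>
              i \<in> {1..\<nu>} \<Longrightarrow> j \<in> {1..\<nu>} \<Longrightarrow> p i j \<noteq> 0 \<Longrightarrow>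
              \<exists>th. th \<in> \<Theta> j
                 \<and> loss \<eta> tbar i j \<zeta> th = (INF t\<in>\<Theta> j. loss \<eta> tbar i j \<zeta> t)
                 \<and> (\<forall>t\<in>\<Theta> j. loss \<eta> tbar i j \<zeta> t = (INF t\<in>\<Theta> j. loss \<eta> tbar i j \<zeta> t) \<longrightarrow> t = th)
                 \<and> th \<in> interior_in (E j) (\<Theta> j)"
    and start: "design X (\<xi> 0)" "TP \<nu> p \<eta> tbar \<Theta> (\<xi> 0) > 0"
    and step: "\<And>s. supp (\<xi> (Suc s)) \<subseteq>
                  supp (\<xi> s) \<union> {x. local_max_on X (\<lambda>y. Psi \<nu> p \<eta> tbar \<Theta> y (\<xi> s)) x}
               \<and> design X (\<xi> (Suc s))
               \<and> (\<forall>\<omega>. design X \<omega> \<and> supp \<omega> \<subseteq>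
                      supp (\<xi> s) \<union> {x. local_max_on X (\<lambda>y. Psi \<nu> p \<eta> tbar \<Theta> y (\<xi> s)) x}
                    \<longrightarrow> TP \<nu> p \<eta> tbar \<Theta> \<omega> \<le> TP \<nu> p \<eta> tbar \<Theta> (\<xi> (Suc s)))"
  shows "\<exists>c. \<forall>x\<in>supp (\<xi> (Suc s)). Psi \<nu> p \<eta> tbar \<Theta> x (\<xi> (Suc s)) = c"
proof -
  interpret regression_models X \<nu> p \<eta> tbar \<Theta>
  proof
    fix j z assume "j \<in> {1..\<nu>}" "z \<in> X"
    with A1 Theta_sub show "continuous_on (\<Theta> j) (\<eta> j z)"
      by (meson continuous_on_if_has_derivative_within_superset)
  qed (use Theta_compact p_nonneg in auto)
  have design_TP: "design X (\<xi> n) \<and> TP \<nu> p \<eta> tbar \<Theta> (\<xi> 0) \<le> TP \<nu> p \<eta> tbar \<Theta> (\<xi> n)" for n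
  proof (induction n)
    case (Suc n)
    have "TP \<nu> p \<eta> tbar \<Theta> (\<xi> n) \<le> TP \<nu> p \<eta> tbar \<Theta> (\<xi> (Suc n))"
      using step[of n] Suc by blast
    with Suc step[of n] show ?case
      by auto
  qed (use start in simp)
  have "design X (\<xi> (Suc s))" "TP \<nu> p \<eta> tbar \<Theta> (\<xi> (Suc s)) > 0"
    using design_TP[of "Suc s"] start by auto
  then have "unique_minimisers (\<xi> (Suc s))"
    unfolding unique_minimisers_def using A2 by blast
  then show ?thesis
    using Psi_constant_on_supp_if_optimal[OF \<open>design X (\<xi> (Suc s))\<close>] step[of s] by blast
qed

end
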